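(* For every $\delta>0$ there is $\kappa>0$ with the following property. Let $\varepsilon\in(0,1)$, let $a,b\in\mathbb{R}^d$ with $a\ne b$, and let $P_{ab}$ be a monotone polygonal $ab$-path. For $\alpha\in[0,\pi/2]$ let $F(\alpha)$ be the set of edges $e$ of $P_{ab}$ with $\angle(ab,e)\ge\alpha$, and $\|F(\alpha)\|$ their total length. If $\|F(i\sqrt{\varepsilon\kappa})\|\le\|P_{ab}\|/i^{2+\delta}$ for all integers $i\in\{1,\dots,\lceil(\pi/2)/\sqrt{\varepsilon\kappa}\rceil\}$, then $\|P_{ab}\|\le(1+\varepsilon)\|ab\|$.
   Context: An $ab$-path $(v_0=a,v_1,\dots,v_m=b)$ is monotone if $(v_i-v_{i-1})\cdot(b-a)\ge 0$ for all $i$ (equivalently, it crosses every hyperplane orthogonal to $ab$ at most once). For undirected segments $e_1,e_2$ with unit direction vectors $\pm\vec u_1,\pm\vec u_2$, $\angle(e_1,e_2)=\arccos|\vec u_1\cdot\vec u_2|$. *)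

theory Defs
  imports Complex_Main
begin

text \<open>Points of R^d are represented as functions nat => real vanishing at
  all coordinates >= d, so that the dimension d can be quantified inside
  the statement (kappa must not depend on d).\<close>

definition is_pt :: "nat \<Rightarrow> (nat \<Rightarrow> real) \<Rightarrow> bool" where
  "is_pt d x \<longleftrightarrow> (\<forall>i\<ge>d. x i = 0)"

definition dotd :: "nat \<Rightarrow> (nat \<Rightarrow> real) \<Rightarrow> (nat \<Rightarrow> real) \<Rightarrow> real" where
  "dotd d x y = (\<Sum>i<d. x i * y i)"

definition normd :: "nat \<Rightarrow> (nat \<Rightarrow> real) \<Rightarrow> real" where
  "normd d x = sqrt (dotd d x x)"

definition distd :: "nat \<Rightarrow> (nat \<Rightarrow> real) \<Rightarrow> (nat \<Rightarrow> real) \<Rightarrow> real" where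
  "distd d x y = normd d (\<lambda>i. y i - x i)"

definition polygonal_path :: "nat \<Rightarrow> (nat \<Rightarrow> real) \<Rightarrow> (nat \<Rightarrow> real) \<Rightarrow> (nat \<Rightarrow> real) list \<Rightarrow> bool" where
  "polygonal_path d a b vs \<longleftrightarrow> length vs \<ge> 2 \<and> hd vs = a \<and> last vs = b \<and>
     (\<forall>v\<in>set vs. is_pt d v) \<and> (\<forall>i. Suc i < length vs \<longrightarrow> vs ! i \<noteq> vs ! Suc i)"

definition monotone_path :: "nat \<Rightarrow> (nat \<Rightarrow> real) \<Rightarrow> (nat \<Rightarrow> real) \<Rightarrow> (nat \<Rightarrow> real) list \<Rightarrow> bool" where
  "monotone_path d a b vs \<longleftrightarrow>
     (\<forall>i. Suc i < length vs \<longrightarrow> dotd d (\<lambda>j. (vs ! Suc i) j - (vs ! i) j) (\<lambda>j. b j - a j) \<ge> 0)"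

definition seg_angle :: "nat \<Rightarrow> (nat \<Rightarrow> real) \<Rightarrow> (nat \<Rightarrow> real) \<Rightarrow> (nat \<Rightarrow> real) \<Rightarrow> (nat \<Rightarrow> real) \<Rightarrow> real" where
  "seg_angle d p q r s = arccos (\<bar>dotd d (\<lambda>j. q j - p j) (\<lambda>j. s j - r j)\<bar>
                                   / (distd d p q * distd d r s))"

definition path_len :: "nat \<Rightarrow> (nat \<Rightarrow> real) list \<Rightarrow> real" where
  "path_len d vs = (\<Sum>i<length vs - 1. distd d (vs ! i) (vs ! Suc i))"

definition F_len :: "nat \<Rightarrow> (nat \<Rightarrow> real) \<Rightarrow> (nat \<Rightarrow> real) \<Rightarrow> (nat \<Rightarrow> real) list \<Rightarrow> real \<Rightarrow> real" where
  "F_len d a b vs \<alpha> = (\<Sum>i\<in>{i. i < length vs - 1 \<and> seg_angle d a b (vs ! i) (vs ! Suc i) \<ge> \<alpha>}.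
                          distd d (vs ! i) (vs ! Suc i))"

end

theory Submission
  imports Defs "HOL-Analysis.Analysis"
begin

text \<open>Write \<open>L\<close> for the length of the path, \<open>D = |ab|\<close>, and \<open>\<ell>\<^sub>i, \<theta>\<^sub>i\<close> for the length of
  the \<open>i\<close>-th edge and its angle with \<open>ab\<close>. By monotonicity the projections
  \<open>\<ell>\<^sub>i cos \<theta>\<^sub>i\<close> of the edges onto \<open>ab\<close> add up to \<open>D\<close>, so
  \<open>L - D = \<Sum>\<^sub>i \<ell>\<^sub>i (1 - cos \<theta>\<^sub>i) \<le> \<Sum>\<^sub>i \<ell>\<^sub>i \<theta>\<^sub>i\<^sup>2 / 2\<close>. With \<open>s = \<surd>(\<epsilon>\<kappa>)\<close>, writing
  \<open>\<theta>\<^sup>2 \<le> s\<^sup>2 \<Sum>\<^bsub>ks \<le> \<theta>\<^esub> (2k + 1)\<close> and exchanging the sums turns this into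
  \<open>L - D \<le> s\<^sup>2/2 \<Sum>\<^sub>k (2k + 1) \<parallel>F(ks)\<parallel>\<close>. The hypothesis makes the \<open>k\<close>-th term
  \<open>O(L k\<^sup>-\<^sup>1\<^sup>-\<^sup>\<delta>)\<close>, a summable series, so \<open>L - D \<le> \<epsilon> L / 4\<close> for a suitable \<open>\<kappa>\<close>
  depending only on \<open>\<delta>\<close>, and hence \<open>L \<le> (1 + \<epsilon>) D\<close>.\<close>

lemma dotd_self_nonneg: "0 \<le> dotd d x x"
  unfolding dotd_def by (intro sum_nonneg) auto

lemma normd_power2: "(normd d x)\<^sup>2 = dotd d x x"
  unfolding normd_def using dotd_self_nonneg by simp

lemma abs_dotd_le_normd_mult: "\<bar>dotd d x y\<bar> \<le> normd d x * normd d y"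
proof -
  have "\<bar>dotd d x y\<bar> \<le> (\<Sum>i<d. \<bar>x i\<bar> * \<bar>y i\<bar>)"
    unfolding dotd_def by (metis (no_types, lifting) abs_mult sum.cong sum_abs)
  also have "\<dots> \<le> L2_set x {..<d} * L2_set y {..<d}"
    by (rule L2_set_mult_ineq)
  also have "\<dots> = normd d x * normd d y"
    unfolding L2_set_def normd_def dotd_def by (simp add: power2_eq_square)
  finally show ?thesis .
qed

lemma distd_pos:
  assumes "is_pt d x" "is_pt d y" "x \<noteq> y"
  shows "0 < distd d x y"
proof -
  obtain j where j: "x j \<noteq> y j"
    using assms(3) by auto
  with assms(1,2) have "j < d"
    unfolding is_pt_def by (cases "j < d") auto
  have "0 < (\<Sum>i<d. (y i - x i) * (y i - x i))"
    by (rule sum_pos2[where i = j]) (use j \<open>j < d\<close> in \<open>auto simp: linorder_neq_iff zero_less_mult_iff\<close>)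
  then show ?thesis
    unfolding distd_def normd_def dotd_def by simp
qed

lemma dotd_commute: "dotd d x y = dotd d y x"
  unfolding dotd_def by (simp add: mult.commute)

lemma dotd_diff_right: "dotd d w (\<lambda>j. q j - p j) = dotd d w q - dotd d w p"
  unfolding dotd_def by (simp add: sum_subtractf right_diff_distrib)

lemma one_minus_cos_le: "1 - cos t \<le> (t::real)\<^sup>2 / 2"
proof -
  have cos_t: "cos t = 1 - 2 * (sin (t / 2))\<^sup>2"
    using cos_double[of "t / 2"] cos_squared_eq[of "t / 2"] by simp
  have "\<bar>sin (t / 2)\<bar> \<le> \<bar>t / 2\<bar>"
    by (rule abs_sin_x_le_abs_x)
  then have "(sin (t / 2))\<^sup>2 \<le> (t / 2)\<^sup>2"
    by (metis abs_ge_zero power2_abs power_mono)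
  then show ?thesis
    using cos_t by (simp add: power_divide)
qed

lemma sum_odd_atMost: "(\<Sum>k\<le>K. 2 * real k + 1) = (real K + 1)\<^sup>2"
  by (induction K) (auto simp: power2_eq_square algebra_simps)

text \<open>A discrete layer-cake bound: the odd numbers \<open>2k + 1\<close> with \<open>ks \<le> \<theta>\<close> add up to
  \<open>(\<lfloor>\<theta>/s\<rfloor> + 1)\<^sup>2 \<ge> (\<theta>/s)\<^sup>2\<close>.\<close>
lemma power2_le_layer_sum:
  assumes s: "0 < s" and \<theta>: "0 \<le> \<theta>" "\<theta> \<le> real N * s"
  shows "\<theta>\<^sup>2 \<le> s\<^sup>2 * (\<Sum>k\<le>N. if real k * s \<le> \<theta> then 2 * real k + 1 else 0)"
proof -
  define K where "K = nat \<lfloor>\<theta> / s\<rfloor>"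
  have K: "real K = of_int \<lfloor>\<theta> / s\<rfloor>"
    unfolding K_def using \<theta> s by simp
  have "real K \<le> real N"
    using K \<theta> s by (metis divide_le_eq le_floor_iff of_int_floor_le order_trans)
  then have "K \<le> N" by simp
  have layers: "{k \<in> {..N}. real k * s \<le> \<theta>} = {..K}"
  proof (rule set_eqI)
    fix k
    have "real k * s \<le> \<theta> \<longleftrightarrow> int k \<le> \<lfloor>\<theta> / s\<rfloor>"
      using s by (simp add: pos_le_divide_eq le_floor_iff)
    also have "\<dots> \<longleftrightarrow> k \<le> K"
      unfolding K_def using \<theta> s by (auto simp: le_nat_iff)
    finally show "k \<in> {k \<in> {..N}. real k * s \<le> \<theta>} \<longleftrightarrow> k \<in> {..K}"
      using \<open>K \<le> N\<close> by auto
  qed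
  have "(\<Sum>k\<le>N. if real k * s \<le> \<theta> then 2 * real k + 1 else 0)
      = (\<Sum>k\<in>{k \<in> {..N}. real k * s \<le> \<theta>}. 2 * real k + 1)"
    by (rule sum.inter_filter[symmetric]) simp
  also have "\<dots> = (real K + 1)\<^sup>2"
    unfolding layers by (rule sum_odd_atMost)
  moreover have "\<theta> / s < real K + 1"
    using K by linarith
  then have "\<theta> < (real K + 1) * s"
    using s by (simp add: divide_less_eq)
  then have "\<theta>\<^sup>2 \<le> ((real K + 1) * s)\<^sup>2"
    using \<theta> by (intro power_mono) auto
  ultimately show ?thesis
    by (simp add: power_mult_distrib mult.commute)
qed

lemma summable_real_powr_minus_one_minus:
  "0 < (\<delta>::real) \<Longrightarrow> summable (\<lambda>n. real n powr (-1 - \<delta>))"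
  by (subst summable_real_powr_iff) auto

text \<open>The weights \<open>2k + 1\<close> against a decay \<open>k\<^sup>-\<^sup>2\<^sup>-\<^sup>\<delta>\<close> leave the summable \<open>3 k\<^sup>-\<^sup>1\<^sup>-\<^sup>\<delta>\<close>.\<close>
lemma weighted_sum_le_of_decay:
  fixes F :: "nat \<Rightarrow> real"
  assumes \<delta>: "0 < \<delta>" and "0 \<le> L" and F0: "F 0 \<le> L"
    and F_nonneg: "\<And>k. 0 \<le> F k"
    and decay: "\<And>k. 1 \<le> k \<Longrightarrow> k \<le> N \<Longrightarrow> F k \<le> L / real k powr (2 + \<delta>)"
  shows "(\<Sum>k\<le>N. (2 * real k + 1) * F k) \<le> (1 + 3 * (\<Sum>n. real n powr (-1 - \<delta>))) * L"
proof -
  have term_le: "(2 * real k + 1) * F k \<le> 3 * L * real k powr (-1 - \<delta>)"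
    if "k \<in> {1..N}" for k
  proof -
    have k: "1 \<le> k" "k \<le> N" "0 < real k"
      using that by auto
    have "(2 * real k + 1) * F k \<le> (3 * real k) * F k"
      using k F_nonneg[of k] by (intro mult_right_mono) auto
    also have "\<dots> \<le> (3 * real k) * (L / real k powr (2 + \<delta>))"
      using decay[OF k(1,2)] k by (intro mult_left_mono) auto
    also have "\<dots> = 3 * L * (real k powr 1 * real k powr (-(2 + \<delta>)))"
      using k powr_minus_divide[of "real k" "2 + \<delta>"] by simp
    also have "\<dots> = 3 * L * real k powr (-1 - \<delta>)"
      using powr_add[of "real k" 1 "-(2 + \<delta>)"] k by (simp add: algebra_simps)
    finally show ?thesis .
  qed
  have "{..N} = insert 0 {1..N}" by auto
  then have "(\<Sum>k\<le>N. (2 * real k + 1) * F k) = F 0 + (\<Sum>k\<in>{1..N}. (2 * real k + 1) * F k)"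
    by simp
  also have "\<dots> \<le> L + (\<Sum>k\<in>{1..N}. 3 * L * real k powr (-1 - \<delta>))"
    using F0 term_le by (intro add_mono sum_mono) auto
  also have "\<dots> = L + 3 * L * (\<Sum>k\<in>{1..N}. real k powr (-1 - \<delta>))"
    by (simp add: sum_distrib_left)
  also have "(\<Sum>k\<in>{1..N}. real k powr (-1 - \<delta>)) \<le> (\<Sum>n. real n powr (-1 - \<delta>))"
    using summable_real_powr_minus_one_minus[OF \<delta>] by (rule sum_le_suminf) auto
  then have "L + 3 * L * (\<Sum>k\<in>{1..N}. real k powr (-1 - \<delta>))
      \<le> L + 3 * L * (\<Sum>n. real n powr (-1 - \<delta>))"
    using \<open>0 \<le> L\<close> by (intro add_left_mono mult_left_mono) auto
  finally show ?thesis
    by (simp add: algebra_simps)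
qed

definition kappa :: "real \<Rightarrow> real" where
  "kappa \<delta> = 1 / (2 * (1 + 3 * (\<Sum>n. real n powr (-1 - \<delta>))))"

lemma kappa_pos: "0 < \<delta> \<Longrightarrow> 0 < kappa \<delta>"
  unfolding kappa_def using summable_real_powr_minus_one_minus
  by (simp add: suminf_nonneg add_pos_nonneg)

lemma le_one_plus_mult_if_excess_le:
  fixes L D \<epsilon> :: real
  assumes "0 < \<epsilon>" "\<epsilon> < 1" "0 \<le> L" and excess: "L - D \<le> \<epsilon> * L / 4"
  shows "L \<le> (1 + \<epsilon>) * D"
proof -
  have "\<epsilon> * \<epsilon> \<le> \<epsilon> * 3"
    using assms by (intro mult_left_mono) auto
  then have "1 \<le> (1 + \<epsilon>) * (1 - \<epsilon> / 4)"
    by (simp add: algebra_simps)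
  then have "L \<le> (1 + \<epsilon>) * (1 - \<epsilon> / 4) * L"
    using \<open>0 \<le> L\<close> by (metis mult_cancel_right2 mult_right_mono)
  also have "\<dots> \<le> (1 + \<epsilon>) * D"
  proof -
    have "(1 - \<epsilon> / 4) * L \<le> D"
      using excess by (simp add: algebra_simps)
    then show ?thesis
      using \<open>0 < \<epsilon>\<close> by (simp add: mult.assoc mult_left_mono)
  qed
  finally show ?thesis .
qed

locale monotone_polygonal_path =
  fixes d :: nat and a b :: "nat \<Rightarrow> real" and vs :: "(nat \<Rightarrow> real) list"
  assumes a_pt: "is_pt d a" and b_pt: "is_pt d b" and a_ne_b: "a \<noteq> b"
    and polygonal: "polygonal_path d a b vs" and monotone: "monotone_path d a b vs"
begin

abbreviation "dir \<equiv> \<lambda>j. b j - a j"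
abbreviation "edge i \<equiv> \<lambda>j. (vs ! Suc i) j - (vs ! i) j"
abbreviation "edge_len i \<equiv> distd d (vs ! i) (vs ! Suc i)"
abbreviation "edge_angle i \<equiv> seg_angle d a b (vs ! i) (vs ! Suc i)"
abbreviation "edges \<equiv> {..<length vs - 1}"

lemma dist_pos: "0 < distd d a b"
  using a_pt b_pt a_ne_b by (rule distd_pos)

lemma edge_len_pos: "i \<in> edges \<Longrightarrow> 0 < edge_len i"
  using polygonal unfolding polygonal_path_def by (intro distd_pos) auto

lemma path_len_eq: "path_len d vs = (\<Sum>i\<in>edges. edge_len i)"
  unfolding path_len_def by simp

lemma path_len_nonneg: "0 \<le> path_len d vs"
  unfolding path_len_eq using edge_len_pos by (intro sum_nonneg) (auto intro: less_imp_le)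

lemma edge_projection_nonneg: "i \<in> edges \<Longrightarrow> 0 \<le> dotd d dir (edge i)"
  using monotone unfolding monotone_path_def by (subst dotd_commute) auto

lemma edge_projection_le: "dotd d dir (edge i) \<le> distd d a b * edge_len i"
  unfolding distd_def using abs_dotd_le_normd_mult by (meson abs_ge_self order_trans)

lemma edge_angle_eq_arccos:
  "i \<in> edges \<Longrightarrow> edge_angle i = arccos (dotd d dir (edge i) / (distd d a b * edge_len i))"
  unfolding seg_angle_def using edge_projection_nonneg by simp

lemma cos_ratio_bounds:
  assumes "i \<in> edges"
  shows "0 \<le> dotd d dir (edge i) / (distd d a b * edge_len i)"
    and "dotd d dir (edge i) / (distd d a b * edge_len i) \<le> 1"
  using edge_projection_nonneg[OF assms] edge_projection_le[of i] edge_len_pos[OF assms] dist_pos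
  by (auto simp: divide_le_eq)

lemma edge_angle_bounds:
  assumes "i \<in> edges"
  shows "0 \<le> edge_angle i \<and> edge_angle i \<le> pi / 2"
  using cos_ratio_bounds[OF assms] arccos_lbound arccos_le_pi2
  unfolding edge_angle_eq_arccos[OF assms] by auto

lemma edge_len_mult_cos_angle:
  assumes "i \<in> edges"
  shows "edge_len i * cos (edge_angle i) = dotd d dir (edge i) / distd d a b"
  using edge_angle_eq_arccos[OF assms] cos_ratio_bounds[OF assms]
    edge_len_pos[OF assms] dist_pos
  by (simp add: cos_arccos field_simps)

lemma sum_edge_projections: "(\<Sum>i\<in>edges. dotd d dir (edge i)) = (distd d a b)\<^sup>2"
proof -
  have ends: "length vs \<ge> 2" "hd vs = a" "last vs = b"
    using polygonal unfolding polygonal_path_def by auto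
  have "(\<Sum>i\<in>edges. dotd d dir (edge i))
      = (\<Sum>i\<in>edges. dotd d dir (vs ! Suc i) - dotd d dir (vs ! i))"
    by (simp add: dotd_diff_right)
  also have "\<dots> = dotd d dir (vs ! (length vs - 1)) - dotd d dir (vs ! 0)"
    by (rule sum_lessThan_telescope)
  also have "\<dots> = dotd d dir b - dotd d dir a"
    using ends last_conv_nth[of vs] hd_conv_nth[of vs] by fastforce
  also have "\<dots> = (distd d a b)\<^sup>2"
    unfolding distd_def by (simp add: normd_power2 dotd_diff_right[symmetric])
  finally show ?thesis .
qed

lemma path_len_minus_dist:
  "path_len d vs - distd d a b = (\<Sum>i\<in>edges. edge_len i * (1 - cos (edge_angle i)))"
proof -
  have "(\<Sum>i\<in>edges. edge_len i * cos (edge_angle i)) = (\<Sum>i\<in>edges. dotd d dir (edge i)) / distd d a b"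
    by (simp add: edge_len_mult_cos_angle sum_divide_distrib)
  also have "\<dots> = distd d a b"
    unfolding sum_edge_projections using dist_pos by (simp add: power2_eq_square)
  finally show ?thesis
    unfolding path_len_eq by (simp add: right_diff_distrib sum_subtractf)
qed

lemma F_len_eq: "F_len d a b vs \<alpha> = (\<Sum>i\<in>edges. if \<alpha> \<le> edge_angle i then edge_len i else 0)"
proof -
  have "{i. i < length vs - 1 \<and> \<alpha> \<le> edge_angle i} = {i \<in> edges. \<alpha> \<le> edge_angle i}"
    by auto
  then show ?thesis
    unfolding F_len_def by (simp only:) (rule sum.inter_filter, simp)
qed

lemma F_len_nonneg: "0 \<le> F_len d a b vs \<alpha>"
  unfolding F_len_eq using edge_len_pos by (intro sum_nonneg) (auto intro: less_imp_le)

lemma F_len_le_path_len: "F_len d a b vs \<alpha> \<le> path_len d vs"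
  unfolding F_len_eq path_len_eq using edge_len_pos by (intro sum_mono) (auto intro: less_imp_le)

lemma excess_le_layer_sum:
  assumes s: "0 < s" and N: "pi / 2 \<le> real N * s"
  shows "path_len d vs - distd d a b
    \<le> s\<^sup>2 / 2 * (\<Sum>k\<le>N. (2 * real k + 1) * F_len d a b vs (real k * s))"
proof -
  let ?layer = "\<lambda>k i. if real k * s \<le> edge_angle i then 2 * real k + 1 else 0"
  have "edge_len i * (1 - cos (edge_angle i)) \<le> s\<^sup>2 / 2 * (\<Sum>k\<le>N. edge_len i * ?layer k i)"
    if i: "i \<in> edges" for i
  proof -
    have "1 - cos (edge_angle i) \<le> (edge_angle i)\<^sup>2 / 2"
      by (rule one_minus_cos_le)
    also have "(edge_angle i)\<^sup>2 \<le> s\<^sup>2 * (\<Sum>k\<le>N. ?layer k i)"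
      using edge_angle_bounds[OF i] s N by (intro power2_le_layer_sum) auto
    finally have "1 - cos (edge_angle i) \<le> s\<^sup>2 / 2 * (\<Sum>k\<le>N. ?layer k i)"
      by simp
    then have "edge_len i * (1 - cos (edge_angle i)) \<le> edge_len i * (s\<^sup>2 / 2 * (\<Sum>k\<le>N. ?layer k i))"
      using edge_len_pos[OF i] by (intro mult_left_mono) auto
    then show ?thesis
      by (simp add: sum_distrib_left ac_simps)
  qed
  then have "path_len d vs - distd d a b \<le> (\<Sum>i\<in>edges. s\<^sup>2 / 2 * (\<Sum>k\<le>N. edge_len i * ?layer k i))"
    unfolding path_len_minus_dist by (rule sum_mono)
  also have "\<dots> = s\<^sup>2 / 2 * (\<Sum>i\<in>edges. \<Sum>k\<le>N. edge_len i * ?layer k i)"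
    by (rule sum_distrib_left[symmetric])
  also have "\<dots> = s\<^sup>2 / 2 * (\<Sum>k\<le>N. \<Sum>i\<in>edges. edge_len i * ?layer k i)"
    by (subst sum.swap) (rule refl)
  also have "(\<Sum>k\<le>N. \<Sum>i\<in>edges. edge_len i * ?layer k i)
      = (\<Sum>k\<le>N. (2 * real k + 1) * F_len d a b vs (real k * s))"
    unfolding F_len_eq sum_distrib_left by (intro sum.cong refl) (auto simp: mult.commute)
  finally show ?thesis .
qed

lemma path_len_le_of_F_len_decay:
  assumes \<delta>: "0 < \<delta>" and \<epsilon>: "0 < \<epsilon>" "\<epsilon> < 1"
    and decay: "\<forall>i::nat. 1 \<le> i \<and> real i \<le> of_int \<lceil>(pi / 2) / sqrt (\<epsilon> * kappa \<delta>)\<rceil> \<longrightarrow>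
      F_len d a b vs (real i * sqrt (\<epsilon> * kappa \<delta>)) \<le> path_len d vs / real i powr (2 + \<delta>)"
  shows "path_len d vs \<le> (1 + \<epsilon>) * distd d a b"
proof -
  define C where "C = 1 + 3 * (\<Sum>n. real n powr (-1 - \<delta>))"
  define s where "s = sqrt (\<epsilon> * kappa \<delta>)"
  define N where "N = nat \<lceil>(pi / 2) / s\<rceil>"
  have "C \<ge> 1"
    unfolding C_def using summable_real_powr_minus_one_minus[OF \<delta>] by (simp add: suminf_nonneg)
  then have s: "0 < s" "s\<^sup>2 = \<epsilon> / (2 * C)"
    unfolding s_def kappa_def C_def using \<epsilon> by auto
  have "(pi / 2) / s \<le> real N"
    unfolding N_def by (rule real_nat_ceiling_ge)
  then have "pi / 2 \<le> real N * s"
    using s(1) by (simp add: divide_le_eq)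
  with s(1) have "path_len d vs - distd d a b
      \<le> s\<^sup>2 / 2 * (\<Sum>k\<le>N. (2 * real k + 1) * F_len d a b vs (real k * s))"
    by (rule excess_le_layer_sum)
  also have "\<dots> \<le> s\<^sup>2 / 2 * (C * path_len d vs)"
  proof (intro mult_left_mono)
    have "F_len d a b vs (real k * s) \<le> path_len d vs / real k powr (2 + \<delta>)"
      if "1 \<le> k" "k \<le> N" for k
      using decay that unfolding N_def s_def by (simp add: le_nat_iff)
    then show "(\<Sum>k\<le>N. (2 * real k + 1) * F_len d a b vs (real k * s)) \<le> C * path_len d vs"
      unfolding C_def
      by (intro weighted_sum_le_of_decay[OF \<delta> path_len_nonneg F_len_le_path_len F_len_nonneg])
  qed simp
  also have "\<dots> = \<epsilon> * path_len d vs / 4"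
    using s \<open>C \<ge> 1\<close> by (simp add: field_simps)
  finally show ?thesis
    using \<epsilon> path_len_nonneg by (intro le_one_plus_mult_if_excess_le)
qed

end

theorem lemma3:
  "\<forall>\<delta>::real. \<delta> > 0 \<longrightarrow> (\<exists>\<kappa>::real. \<kappa> > 0 \<and>
     (\<forall>(\<epsilon>::real) (d::nat) a b vs.
        0 < \<epsilon> \<and> \<epsilon> < 1 \<and> is_pt d a \<and> is_pt d b \<and> a \<noteq> b \<and>
        polygonal_path d a b vs \<and> monotone_path d a b vs \<and>
        (\<forall>i::nat. 1 \<le> i \<and> real i \<le> of_int \<lceil>(pi / 2) / sqrt (\<epsilon> * \<kappa>)\<rceil> \<longrightarrow>
            F_len d a b vs (real i * sqrt (\<epsilon> * \<kappa>)) \<le> path_len d vs / (real i) powr (2 + \<delta>))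
        \<longrightarrow> path_len d vs \<le> (1 + \<epsilon>) * distd d a b))"
proof (intro allI impI)
  fix \<delta> :: real
  assume \<delta>: "0 < \<delta>"
  show "\<exists>\<kappa>>0. \<forall>\<epsilon> d a b vs. 0 < \<epsilon> \<and> \<epsilon> < 1 \<and> is_pt d a \<and> is_pt d b \<and> a \<noteq> b \<and>
      polygonal_path d a b vs \<and> monotone_path d a b vs \<and>
      (\<forall>i::nat. 1 \<le> i \<and> real i \<le> of_int \<lceil>(pi / 2) / sqrt (\<epsilon> * \<kappa>)\<rceil> \<longrightarrow>
        F_len d a b vs (real i * sqrt (\<epsilon> * \<kappa>)) \<le> path_len d vs / real i powr (2 + \<delta>))
      \<longrightarrow> path_len d vs \<le> (1 + \<epsilon>) * distd d a b"
  proof (intro exI[of _ "kappa \<delta>"] conjI allI impI)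
    show "0 < kappa \<delta>"
      using \<delta> by (rule kappa_pos)
  next
    fix \<epsilon> d a b vs
    assume "0 < \<epsilon> \<and> \<epsilon> < 1 \<and> is_pt d a \<and> is_pt d b \<and> a \<noteq> b \<and>
      polygonal_path d a b vs \<and> monotone_path d a b vs \<and>
      (\<forall>i::nat. 1 \<le> i \<and> real i \<le> of_int \<lceil>(pi / 2) / sqrt (\<epsilon> * kappa \<delta>)\<rceil> \<longrightarrow>
        F_len d a b vs (real i * sqrt (\<epsilon> * kappa \<delta>)) \<le> path_len d vs / real i powr (2 + \<delta>))"
    then show "path_len d vs \<le> (1 + \<epsilon>) * distd d a b"
      using \<delta> by (intro monotone_polygonal_path.path_len_le_of_F_len_decay)
        (auto intro: monotone_polygonal_path.intro)
  qed
qed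

end
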